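(* Let $[X,A]$ be a Banach space with an $i$-operator such that $[X,A]\not\simeq[X,-A]$ and $[X,A]\simeq[X\oplus X,A\oplus A]$. Let $\mathfrak C$ consist of all complex operators $[T,A',B']:[U,A']\to[V,B']$ (between arbitrary Banach spaces with an $i$-operator) that factor over $[X,A]$, i.e. $T=RS$ for some bounded linear $S:U\to X$ and $R:X\to V$ with $SA'=AS$ and $RA=B'R$. Then $\mathfrak C$ is a complex operator ideal which is not self conjugate.
   Context: A Banach space with an $i$-operator is a pair $[X,A]$ with $X$ a real Banach space and $A:X\to X$ bounded linear with $A^2=-I_X$ and $\|\alpha x+\beta Ax\|=\|x\|$ whenever $\alpha^2+\beta^2=1$; these are exactly complex Banach spaces, and $[X,-A]$ is the complex conjugate space. A bounded linear $T:X\to Y$ with $TA=BT$ is a complex operator $[T,A,B]:[X,A]\to[Y,B]$; two such spaces are isomorphic ($\simeq$) if there is such a $T$ that is bijective. $A\oplus A$ is the $i$-operator $(x_1,x_2)\mapsto(Ax_1,Ax_2)$ on $X\oplus X$ (e.g. with norm $\|x_1\|+\|x_2\|$). A complex operator ideal (Pietsch) assigns to each pair of such spaces a linear subspace of complex operators between them, containing all finite rank complex operators and stable under composition on either side with bounded complex operators. It is self conjugate if $[T,A,B]\in\mathfrak C$ implies $[T,-A,-B]\in\mathfrak C$ and conversely, i.e. $\{[T,-A,-B]:[T,A,B]\in\mathfrak C\}=\mathfrak C$. *)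

theory Defs
  imports "HOL-Analysis.Analysis"
begin

definition i_operator :: "('a::banach \<Rightarrow> 'a) \<Rightarrow> bool" where
  "i_operator A \<longleftrightarrow> bounded_linear A \<and> (\<forall>x. A (A x) = - x) \<and>
     (\<forall>(\<alpha>::real) (\<beta>::real) x. \<alpha>\<^sup>2 + \<beta>\<^sup>2 = 1 \<longrightarrow> norm (\<alpha> *\<^sub>R x + \<beta> *\<^sub>R A x) = norm x)"

definition conj_op :: "('a::banach \<Rightarrow> 'a) \<Rightarrow> ('a \<Rightarrow> 'a)" where
  "conj_op A = (\<lambda>x. - A x)"

definition sum_op :: "('a::banach \<Rightarrow> 'a) \<Rightarrow> ('a \<times> 'a \<Rightarrow> 'a \<times> 'a)" where
  "sum_op A = (\<lambda>(x1, x2). (A x1, A x2))"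

definition complex_op :: "('a::banach \<Rightarrow> 'b::banach) \<Rightarrow> ('a \<Rightarrow> 'a) \<Rightarrow> ('b \<Rightarrow> 'b) \<Rightarrow> bool" where
  "complex_op T A B \<longleftrightarrow> bounded_linear T \<and> T \<circ> A = B \<circ> T"

definition cisomorphic :: "('a::banach \<Rightarrow> 'a) \<Rightarrow> ('b::banach \<Rightarrow> 'b) \<Rightarrow> bool" where
  "cisomorphic A B \<longleftrightarrow> (\<exists>T. complex_op T A B \<and> bij T)"

text \<open>Multiplication by the complex scalar c in the complex space [Y,B]:
  (a + i b) y = a y + b B y.\<close>
definition cscale :: "('b::banach \<Rightarrow> 'b) \<Rightarrow> complex \<Rightarrow> 'b \<Rightarrow> 'b" where
  "cscale B c y = Re c *\<^sub>R y + Im c *\<^sub>R B y"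

definition finite_rank :: "('a::real_vector \<Rightarrow> 'b::real_vector) \<Rightarrow> bool" where
  "finite_rank T \<longleftrightarrow> (\<exists>F. finite F \<and> range T \<subseteq> span F)"

definition factors_over :: "('x::banach \<Rightarrow> 'x) \<Rightarrow> ('u::banach \<Rightarrow> 'u) \<Rightarrow> ('v::banach \<Rightarrow> 'v)
     \<Rightarrow> ('u \<Rightarrow> 'v) \<Rightarrow> bool" where
  "factors_over A A' B' T \<longleftrightarrow>
     (\<exists>(S::'u \<Rightarrow> 'x) (R::'x \<Rightarrow> 'v). complex_op S A' A \<and> complex_op R A B' \<and> T = R \<circ> S)"

end

theory Submission
  imports Defs
begin

text \<open>
  Closure under composition is
  immediate, and sums factor because \<open>[X,A] \<simeq> [X,A] \<oplus> [X,A]\<close> via some \<open>J\<close>: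
  \<open>T\<^sub>1 + T\<^sub>2 = ((R\<^sub>1 \<circ> fst + R\<^sub>2 \<circ> snd) \<circ> J) \<circ> (J\<inverse> \<circ> (S\<^sub>1, S\<^sub>2))\<close>, where \<open>J\<inverse>\<close> is bounded by the
  bounded inverse theorem. A complex rank-one operator factors through any nonzero \<open>[X,A]\<close> via
  a functional that is \<open>1\<close> at some \<open>x\<^sub>0\<close> and \<open>0\<close> at \<open>A x\<^sub>0\<close> (Hahn-Banach), and a complex
  finite-rank operator \<open>T : [U,A'] \<rightarrow> [V,B']\<close> is a finite sum of such operators, since
  \<open>T = (T - B' T A') / 2\<close> and the finite-dimensional range of \<open>T\<close> admits a projection that is
  a finite sum of bounded rank-one maps.

  If the identity of \<open>[X,-A]\<close> factored over \<open>[X,A]\<close>, then \<open>[X,-A]\<close> would be complemented in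
  \<open>[X,A]\<close>, say \<open>[X,A] \<simeq> [X,-A] \<oplus> Z\<close>. Conjugating \<open>[X,A] \<simeq> [X,A] \<oplus> [X,A]\<close> gives
  \<open>[X,-A] \<simeq> [X,-A] \<oplus> [X,-A]\<close>, hence (Pelczynski's decomposition argument)
  \<open>[X,A] \<simeq> [X,-A] \<oplus> [X,-A] \<oplus> Z \<simeq> [X,-A] \<oplus> [X,A]\<close>. Conjugating this isomorphism and
  swapping the summands yields \<open>[X,-A] \<simeq> [X,A]\<close>, which was excluded.
\<close>

section \<open>Norming functionals and finite-dimensional projections\<close>

text \<open>Graphs of linear functionals on subspaces that are dominated by the norm. Applying Zorn's
  lemma to these sets of pairs avoids partial functions.\<close>
definition norm_dominated_graph :: "('a::real_normed_vector \<times> real) set \<Rightarrow> bool" where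
  "norm_dominated_graph G \<longleftrightarrow>
     (\<forall>x a y b. (x, a) \<in> G \<longrightarrow> (y, b) \<in> G \<longrightarrow> (x + y, a + b) \<in> G) \<and>
     (\<forall>x a c. (x, a) \<in> G \<longrightarrow> (c *\<^sub>R x, c * a) \<in> G) \<and>
     (\<forall>x a. (x, a) \<in> G \<longrightarrow> a \<le> norm x)"

lemma norm_dominated_graphI:
  assumes "\<And>x a y b. (x, a) \<in> G \<Longrightarrow> (y, b) \<in> G \<Longrightarrow> (x + y, a + b) \<in> G"
    and "\<And>x a c. (x, a) \<in> G \<Longrightarrow> (c *\<^sub>R x, c * a) \<in> G"
    and "\<And>x a. (x, a) \<in> G \<Longrightarrow> a \<le> norm x"
  shows "norm_dominated_graph G"
  using assms unfolding norm_dominated_graph_def by blast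

lemma norm_dominated_graph_add:
  "norm_dominated_graph G \<Longrightarrow> (x, a) \<in> G \<Longrightarrow> (y, b) \<in> G \<Longrightarrow> (x + y, a + b) \<in> G"
  unfolding norm_dominated_graph_def by blast

lemma norm_dominated_graph_scaleR:
  "norm_dominated_graph G \<Longrightarrow> (x, a) \<in> G \<Longrightarrow> (c *\<^sub>R x, c * a) \<in> G"
  unfolding norm_dominated_graph_def by blast

lemma norm_dominated_graph_le:
  "norm_dominated_graph G \<Longrightarrow> (x, a) \<in> G \<Longrightarrow> a \<le> norm x"
  unfolding norm_dominated_graph_def by blast

lemma norm_dominated_graph_unique:
  assumes G: "norm_dominated_graph G" and "(x, a) \<in> G" "(x, b) \<in> G"
  shows "a = b"
proof -
  have "(x + (-1) *\<^sub>R x, a + (-1) * b) \<in> G" "(x + (-1) *\<^sub>R x, b + (-1) * a) \<in> G"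
    using assms by (meson norm_dominated_graph_add norm_dominated_graph_scaleR)+
  then have "a + (-1) * b \<le> 0" "b + (-1) * a \<le> 0"
    using norm_dominated_graph_le[OF G] by fastforce+
  then show ?thesis by simp
qed

lemma norm_dominated_graph_extension_constant:
  assumes G: "norm_dominated_graph G" and "G \<noteq> {}"
  shows "\<exists>c. \<forall>y a. (y, a) \<in> G \<longrightarrow> a - norm (y - z) \<le> c \<and> c \<le> norm (y + z) - a"
proof -
  have sep: "a - norm (u - z) \<le> norm (v + z) - b" if "(u, a) \<in> G" "(v, b) \<in> G" for u a v b
  proof -
    have "a + b \<le> norm (u + v)"
      using norm_dominated_graph_le[OF G norm_dominated_graph_add[OF G that]] .
    also have "\<dots> \<le> norm (u - z) + norm (v + z)"
      using norm_triangle_ineq[of "u - z" "v + z"] by simp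
    finally show ?thesis by simp
  qed
  define L where "L = {a - norm (y - z) | y a. (y, a) \<in> G}"
  have "L \<noteq> {}" using \<open>G \<noteq> {}\<close> unfolding L_def by auto
  moreover have "bdd_above L"
    using \<open>G \<noteq> {}\<close> sep unfolding L_def bdd_above_def by fastforce
  ultimately have "a - norm (y - z) \<le> Sup L \<and> Sup L \<le> norm (y + z) - a" if "(y, a) \<in> G" for y a
    using that sep by (auto intro!: cSup_upper cSup_least simp: L_def)
  then show ?thesis by blast
qed

lemma norm_dominated_graph_extension_le:
  assumes G: "norm_dominated_graph G" and "(y, b) \<in> G"
    and c: "\<And>y a. (y, a) \<in> G \<Longrightarrow> a - norm (y - z) \<le> c \<and> c \<le> norm (y + z) - a"
  shows "b + t * c \<le> norm (y + t *\<^sub>R z)"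
proof -
  have scaled: "c \<le> norm (r *\<^sub>R y + z) - r * b" "r * b - norm (r *\<^sub>R y - z) \<le> c" for r
    using c[OF norm_dominated_graph_scaleR[OF G \<open>(y, b) \<in> G\<close>]] by auto
  consider "t = 0" | "t > 0" | "t < 0"
    by linarith
  then show ?thesis
  proof cases
    case 1
    then show ?thesis
      using norm_dominated_graph_le[OF G \<open>(y, b) \<in> G\<close>] by simp
  next
    case 2
    have "t * c \<le> t * (norm ((1 / t) *\<^sub>R y + z) - (1 / t) * b)"
      using scaled(1)[of "1 / t"] 2 by (simp add: mult_left_mono)
    also have "\<dots> = norm (t *\<^sub>R ((1 / t) *\<^sub>R y + z)) - b"
      using 2 by (simp add: right_diff_distrib)
    also have "t *\<^sub>R ((1 / t) *\<^sub>R y + z) = y + t *\<^sub>R z"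
      using 2 by (simp add: scaleR_add_right)
    finally show ?thesis
      by simp
  next
    case 3
    define s where "s = - t"
    have "s > 0"
      using 3 by (simp add: s_def)
    have yz: "y + t *\<^sub>R z = s *\<^sub>R ((1 / s) *\<^sub>R y - z)"
      using \<open>s > 0\<close> by (simp add: s_def scaleR_diff_right)
    have "b - norm (y + t *\<^sub>R z) = s * ((1 / s) * b - norm ((1 / s) *\<^sub>R y - z))"
      using \<open>s > 0\<close> unfolding yz by (simp add: right_diff_distrib)
    also have "\<dots> \<le> s * c"
      using scaled(2)[of "1 / s"] \<open>s > 0\<close> by (simp add: mult_left_mono)
    finally show ?thesis
      by (simp add: s_def)
  qed
qed

lemma norm_dominated_graph_extend:
  assumes G: "norm_dominated_graph G"
    and c: "\<And>y a. (y, a) \<in> G \<Longrightarrow> a - norm (y - z) \<le> c \<and> c \<le> norm (y + z) - a"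
  shows "norm_dominated_graph {(y + t *\<^sub>R z, a + t * c) | y a t. (y, a) \<in> G}"
    (is "norm_dominated_graph ?H")
proof -
  have mem: "(y + t *\<^sub>R z, a + t * c) \<in> ?H" if "(y, a) \<in> G" for y a t
    using that by blast
  show ?thesis
  proof (rule norm_dominated_graphI)
    fix x a y b assume "(x, a) \<in> ?H" "(y, b) \<in> ?H"
    then obtain x' a' s y' b' t where "(x', a') \<in> G" "(y', b') \<in> G"
      and "x = x' + s *\<^sub>R z" "a = a' + s * c" "y = y' + t *\<^sub>R z" "b = b' + t * c"
      by blast
    moreover have "(x' + y', a' + b') \<in> G"
      using norm_dominated_graph_add[OF G] calculation(1,2) .
    ultimately show "(x + y, a + b) \<in> ?H"
      using mem[of "x' + y'" "a' + b'" "s + t"] by (simp add: algebra_simps)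
  next
    fix x a k assume "(x, a) \<in> ?H"
    then obtain x' a' s where "(x', a') \<in> G" "x = x' + s *\<^sub>R z" "a = a' + s * c"
      by blast
    moreover have "(k *\<^sub>R x', k * a') \<in> G"
      using norm_dominated_graph_scaleR[OF G] calculation(1) .
    ultimately show "(k *\<^sub>R x, k * a) \<in> ?H"
      using mem[of "k *\<^sub>R x'" "k * a'" "k * s"] by (simp add: algebra_simps)
  next
    fix x a assume "(x, a) \<in> ?H"
    then show "a \<le> norm x"
      using norm_dominated_graph_extension_le[OF G _ c] by blast
  qed
qed

lemma norm_dominated_graph_Union_chain:
  assumes "\<And>G. G \<in> C \<Longrightarrow> norm_dominated_graph G" and "subset.chain A C"
  shows "norm_dominated_graph (\<Union>C)"
proof (rule norm_dominated_graphI)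
  fix x a y b assume "(x, a) \<in> \<Union>C" "(y, b) \<in> \<Union>C"
  then obtain G where "G \<in> C" "(x, a) \<in> G" "(y, b) \<in> G"
    using \<open>subset.chain A C\<close> unfolding subset.chain_def by blast
  then show "(x + y, a + b) \<in> \<Union>C"
    using assms(1) norm_dominated_graph_add by blast
next
  fix x a c assume "(x, a) \<in> \<Union>C"
  then show "(c *\<^sub>R x, c * a) \<in> \<Union>C"
    using assms(1) norm_dominated_graph_scaleR by blast
next
  fix x a assume "(x, a) \<in> \<Union>C"
  then show "a \<le> norm x"
    using assms(1) norm_dominated_graph_le by blast
qed

lemma maximal_norm_dominated_graph_total:
  assumes M: "norm_dominated_graph M" "M \<noteq> {}"
    and maximal: "\<And>G. norm_dominated_graph G \<Longrightarrow> M \<subseteq> G \<Longrightarrow> G = M"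
  shows "\<exists>a. (x, a) \<in> M"
proof -
  obtain c where c: "\<And>y a. (y, a) \<in> M \<Longrightarrow> a - norm (y - x) \<le> c \<and> c \<le> norm (y + x) - a"
    using norm_dominated_graph_extension_constant[OF M] by blast
  let ?H = "{(y + t *\<^sub>R x, a + t * c) | y a t. (y, a) \<in> M}"
  have "M \<subseteq> ?H"
    by (force intro: exI[of _ 0])
  then have "?H = M"
    using maximal norm_dominated_graph_extend[OF M(1) c] by blast
  moreover obtain y a where "(y, a) \<in> M"
    using M(2) by auto
  then have "(0, 0) \<in> M"
    using norm_dominated_graph_scaleR[OF M(1), of y a 0] by simp
  then have "(x, c) \<in> ?H"
    by (force intro: exI[of _ 1])
  ultimately show ?thesis by blast
qed

lemma total_norm_dominated_graph_functional:
  assumes M: "norm_dominated_graph M" and total: "\<And>x. \<exists>a. (x, a) \<in> M"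
  shows "\<exists>f. bounded_linear f \<and> (\<forall>x. \<bar>f x\<bar> \<le> norm x) \<and> (\<forall>x. (x, f x) \<in> M)"
proof -
  define f where "f x = (THE a. (x, a) \<in> M)" for x
  have graph: "(x, f x) \<in> M" for x
    unfolding f_def using total norm_dominated_graph_unique[OF M] by (metis theI)
  have graph_eq: "f x = a" if "(x, a) \<in> M" for x a
    using norm_dominated_graph_unique[OF M that graph] by simp
  have le: "f x \<le> norm x" for x
    using norm_dominated_graph_le[OF M graph] .
  have scaleR: "f (r *\<^sub>R x) = r * f x" for r x
    using graph_eq norm_dominated_graph_scaleR[OF M graph] by blast
  have abs_le: "\<bar>f x\<bar> \<le> norm x" for x
    using le[of x] le[of "- x"] scaleR[of "-1" x] by simp
  have "bounded_linear f"
  proof (rule bounded_linear_intro[where K = 1])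
    show "f (x + y) = f x + f y" for x y
      using graph_eq norm_dominated_graph_add[OF M graph graph] by blast
    show "f (r *\<^sub>R x) = r *\<^sub>R f x" for r x
      using scaleR by simp
    show "norm (f x) \<le> norm x * 1" for x
      using abs_le by simp
  qed
  then show ?thesis using abs_le graph by blast
qed

lemma norm_dominated_graph_line:
  "norm_dominated_graph (range (\<lambda>t. (t *\<^sub>R x0, t * norm x0)))" (is "norm_dominated_graph ?L")
proof (rule norm_dominated_graphI)
  fix x a y b assume "(x, a) \<in> ?L" "(y, b) \<in> ?L"
  then obtain t s where "(x, a) = (t *\<^sub>R x0, t * norm x0)" "(y, b) = (s *\<^sub>R x0, s * norm x0)"
    by blast
  then show "(x + y, a + b) \<in> ?L"
    by (auto intro!: range_eqI[of _ _ "t + s"] simp: algebra_simps)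
next
  fix x a c assume "(x, a) \<in> ?L"
  then obtain t where "(x, a) = (t *\<^sub>R x0, t * norm x0)"
    by blast
  then show "(c *\<^sub>R x, c * a) \<in> ?L"
    by (auto intro!: range_eqI[of _ _ "c * t"])
next
  show "a \<le> norm x" if "(x, a) \<in> ?L" for x a
    using that by (auto intro!: mult_right_mono)
qed

lemma maximal_norm_dominated_graph:
  assumes "norm_dominated_graph G0"
  shows "\<exists>M. norm_dominated_graph M \<and> G0 \<subseteq> M \<and>
    (\<forall>G. norm_dominated_graph G \<and> M \<subseteq> G \<longrightarrow> G = M)"
proof -
  let ?A = "{G. norm_dominated_graph G \<and> G0 \<subseteq> G}"
  have "\<exists>M\<in>?A. \<forall>G\<in>?A. M \<subseteq> G \<longrightarrow> G = M"
  proof (rule subset_Zorn_nonempty)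
    fix C assume "C \<noteq> {}" and C: "subset.chain ?A C"
    then have "norm_dominated_graph (\<Union>C)"
      by (intro norm_dominated_graph_Union_chain) (auto simp: subset.chain_def)
    moreover have "G0 \<subseteq> \<Union>C"
      using \<open>C \<noteq> {}\<close> C unfolding subset.chain_def by blast
    ultimately show "\<Union>C \<in> ?A"
      by blast
  qed (use assms in blast)
  then obtain M where "norm_dominated_graph M" "G0 \<subseteq> M" and "\<forall>G\<in>?A. M \<subseteq> G \<longrightarrow> G = M"
    by blast
  then show ?thesis
    by (intro exI[of _ M]) blast
qed

theorem norming_functional:
  fixes x0 :: "'a::real_normed_vector"
  shows "\<exists>f. bounded_linear f \<and> (\<forall>x. \<bar>f x\<bar> \<le> norm x) \<and> f x0 = norm x0"
proof -
  obtain M where M: "norm_dominated_graph M" "range (\<lambda>t. (t *\<^sub>R x0, t * norm x0)) \<subseteq> M"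
    and "\<forall>G. norm_dominated_graph G \<and> M \<subseteq> G \<longrightarrow> G = M"
    using maximal_norm_dominated_graph[OF norm_dominated_graph_line[of x0]] by blast
  then have maximal: "\<And>G. norm_dominated_graph G \<Longrightarrow> M \<subseteq> G \<Longrightarrow> G = M"
    by blast
  have "(x0, norm x0) \<in> M"
    using M(2) by (auto intro!: range_eqI[of _ _ 1])
  then have "\<exists>a. (x, a) \<in> M" for x
    using maximal_norm_dominated_graph_total[OF M(1) _ maximal] by blast
  then obtain f where "bounded_linear f" "\<forall>x. \<bar>f x\<bar> \<le> norm x" "\<forall>x. (x, f x) \<in> M"
    using total_norm_dominated_graph_functional[OF M(1)] by blast
  moreover have "f x0 = norm x0"
    using norm_dominated_graph_unique[OF M(1)] calculation(3) \<open>(x0, norm x0) \<in> M\<close> by blast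
  ultimately show ?thesis by blast
qed

definition rank_one_sum :: "(('v \<Rightarrow> real) \<times> 'v) list \<Rightarrow> 'v \<Rightarrow> 'v::real_vector" where
  "rank_one_sum ps v = (\<Sum>(\<phi>, e)\<leftarrow>ps. \<phi> v *\<^sub>R e)"

lemma rank_one_sum_Nil [simp]: "rank_one_sum [] v = 0"
  by (simp add: rank_one_sum_def)

lemma rank_one_sum_Cons [simp]: "rank_one_sum ((\<phi>, e) # ps) v = \<phi> v *\<^sub>R e + rank_one_sum ps v"
  by (simp add: rank_one_sum_def)

lemma bounded_linear_rank_one_sum:
  "\<forall>(\<phi>, e)\<in>set ps. bounded_linear \<phi> \<Longrightarrow> bounded_linear (rank_one_sum ps)"
proof (induction ps)
  case Nil
  then show ?case
    by (simp add: bounded_linear_zero[unfolded rank_one_sum_Nil[symmetric]])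
next
  case (Cons p ps)
  obtain \<phi> e where p: "p = (\<phi>, e)"
    by fastforce
  have "bounded_linear (\<lambda>v. \<phi> v *\<^sub>R e + rank_one_sum ps v)"
    using Cons p by (auto intro!: bounded_linear_add bounded_linear_compose[OF bounded_linear_scaleR_left])
  then show ?case
    by (simp add: p)
qed

lemma rank_one_sum_in_span:
  "\<forall>(\<phi>, e)\<in>set ps. e \<in> span F \<Longrightarrow> rank_one_sum ps v \<in> span F"
  by (induction ps) (auto intro!: span_add span_scale span_zero)

lemma functional_vanishing_on_fixed_points:
  fixes P :: "'v::real_normed_vector \<Rightarrow> 'v"
  assumes P: "bounded_linear P" and "P b \<noteq> b"
  shows "\<exists>k :: 'v \<Rightarrow> real. bounded_linear k \<and> k b = 1 \<and> (\<forall>v. P v = v \<longrightarrow> k v = 0)"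
proof -
  define w where "w = b - P b"
  have "w \<noteq> 0"
    using \<open>P b \<noteq> b\<close> by (simp add: w_def)
  obtain h :: "'v \<Rightarrow> real" where h: "bounded_linear h" "h w = norm w"
    using norming_functional by blast
  define k where "k v = h (v - P v) / norm w" for v
  have "bounded_linear k"
    unfolding k_def[abs_def]
    by (intro bounded_linear_divide[THEN bounded_linear_compose] bounded_linear_compose[OF h(1)]
        bounded_linear_sub bounded_linear_ident P)
  moreover have "k b = 1"
    using h(2) \<open>w \<noteq> 0\<close> by (simp add: k_def w_def)
  moreover have "k v = 0" if "P v = v" for v
    using that linear_0[OF bounded_linear.linear[OF h(1)]] by (simp add: k_def)
  ultimately show ?thesis by blast
qed

lemma rank_one_sum_precompose:
  "rank_one_sum (map (\<lambda>(\<phi>, e). (\<lambda>v. \<phi> (g v), e)) ps) v = rank_one_sum ps (g v)"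
  by (induction ps) (auto simp: rank_one_sum_def)

lemma rank_one_projection_insert:
  fixes F :: "'v::real_normed_vector set"
  assumes ps: "\<forall>(\<phi>, e)\<in>set ps. bounded_linear \<phi> \<and> e \<in> span F"
    and id_on_span: "\<And>v. v \<in> span F \<Longrightarrow> rank_one_sum ps v = v" and "b \<notin> span F"
  shows "\<exists>ps'. (\<forall>(\<phi>, e)\<in>set ps'. bounded_linear \<phi> \<and> e \<in> span (insert b F)) \<and>
    (\<forall>v\<in>span (insert b F). rank_one_sum ps' v = v)"
proof -
  have P: "bounded_linear (rank_one_sum ps)"
    using ps by (intro bounded_linear_rank_one_sum) auto
  have "rank_one_sum ps b \<in> span F"
    using ps by (intro rank_one_sum_in_span) auto
  then have "rank_one_sum ps b \<noteq> b"
    using \<open>b \<notin> span F\<close> by auto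
  then obtain k :: "'v \<Rightarrow> real" where k: "bounded_linear k" "k b = 1"
    and fixed: "\<And>v. rank_one_sum ps v = v \<Longrightarrow> k v = 0"
    using functional_vanishing_on_fixed_points[OF P] by blast
  \<comment> \<open>first split off the \<open>b\<close>-coordinate \<open>k\<close>, then project the rest onto \<open>span F\<close>\<close>
  define ps' where "ps' = (k, b) # map (\<lambda>(\<phi>, e). (\<lambda>v. \<phi> (v - k v *\<^sub>R b), e)) ps"
  have shifted: "bounded_linear (\<lambda>v. \<phi> (v - k v *\<^sub>R b))" if "bounded_linear \<phi>" for \<phi>
    using k(1) by (intro bounded_linear_compose[OF that] bounded_linear_sub bounded_linear_ident
        bounded_linear_compose[OF bounded_linear_scaleR_left])
  have "bounded_linear \<phi>" "e \<in> span (insert b F)" if "(\<phi>, e) \<in> set ps" for \<phi> e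
    using bspec[OF ps that] span_mono[of F "insert b F"] by auto
  then have "\<forall>(\<phi>, e)\<in>set ps'. bounded_linear \<phi> \<and> e \<in> span (insert b F)"
    using k(1) by (auto simp: ps'_def span_base intro: shifted)
  moreover have "rank_one_sum ps' v = v" if "v \<in> span (insert b F)" for v
  proof -
    from that obtain t where t: "v - t *\<^sub>R b \<in> span F"
      unfolding span_insert by blast
    then have "k v = t"
      using fixed[OF id_on_span[OF t]] k(2)
      by (simp add: linear_diff[OF bounded_linear.linear[OF k(1)]]
          linear_scale[OF bounded_linear.linear[OF k(1)]])
    then show ?thesis
      using id_on_span[OF t] by (simp add: ps'_def rank_one_sum_precompose)
  qed
  ultimately show ?thesis
    by (intro exI[of _ ps']) blast
qed

lemma finite_span_rank_one_projection:
  fixes F :: "'v::real_normed_vector set"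
  assumes "finite F"
  shows "\<exists>ps. (\<forall>(\<phi>, e)\<in>set ps. bounded_linear \<phi> \<and> e \<in> span F) \<and>
    (\<forall>v\<in>span F. rank_one_sum ps v = v)"
  using assms
proof (induction F rule: finite_induct)
  case empty
  then show ?case
    by (intro exI[of _ "[]"]) simp
next
  case (insert b F)
  then obtain ps where ps: "\<forall>(\<phi>, e)\<in>set ps. bounded_linear \<phi> \<and> e \<in> span F"
    and id_on_span: "\<And>v. v \<in> span F \<Longrightarrow> rank_one_sum ps v = v"
    by blast
  show ?case
  proof (cases "b \<in> span F")
    case True
    then show ?thesis
      unfolding span_redundant[OF True] using ps id_on_span by (intro exI[of _ ps]) simp
  next
    case False
    then show ?thesis
      using rank_one_projection_insert[OF ps id_on_span] by blast
  qed
qed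

section \<open>The bounded inverse theorem\<close>

lemma Baire_closure_image_cball:
  fixes T :: "'a::real_normed_vector \<Rightarrow> 'b::banach"
  assumes "surj T"
  shows "\<exists>n y r. r > 0 \<and> ball y r \<subseteq> closure (T ` cball 0 (real n))"
proof (rule ccontr)
  assume no_ball: "\<not> ?thesis"
  define K where "K n = closure (T ` cball 0 (real n))" for n
  have "interior (K n) = {}" for n
  proof (rule equals0I)
    fix y assume "y \<in> interior (K n)"
    then obtain r where "r > 0" "ball y r \<subseteq> interior (K n)"
      using open_contains_ball open_interior by blast
    then show False
      using no_ball interior_subset[of "K n"] unfolding K_def by blast
  qed
  then have "euclidean interior_of \<Union>(range K) = {}"
    by (intro Baire_category_alt)
      (auto simp: completely_metrizable_space_euclidean K_def closed_closedin[symmetric])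
  moreover have "y \<in> \<Union>(range K)" for y
  proof -
    obtain x where "y = T x"
      using \<open>surj T\<close> by (metis surjD)
    moreover have "T x \<in> K (nat \<lceil>norm x\<rceil>)"
      unfolding K_def by (intro subsetD[OF closure_subset] imageI) (simp add: real_nat_ceiling_ge)
    ultimately show ?thesis by blast
  qed
  then have "\<Union>(range K) = UNIV"
    by blast
  ultimately show False
    by (metis UNIV_not_empty interior_of_topspace topspace_euclidean)
qed

lemma closure_image_cball_centered:
  fixes T :: "'a::real_normed_vector \<Rightarrow> 'b::real_normed_vector"
  assumes "linear T" and ball: "ball y r \<subseteq> closure (T ` cball 0 m)"
  shows "ball 0 r \<subseteq> closure (T ` cball 0 (2 * m))"
proof
  fix v :: 'b assume "v \<in> ball 0 r"
  then have "y + v \<in> ball y r" "y \<in> ball y r"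
    by (auto simp: dist_norm le_less_trans[OF norm_ge_zero])
  then have "y + v \<in> closure (T ` cball 0 m)" "y \<in> closure (T ` cball 0 m)"
    using ball by blast+
  show "v \<in> closure (T ` cball 0 (2 * m))"
  proof (unfold closure_approachable, intro allI impI)
    fix e :: real assume "e > 0"
    obtain x1 where x1: "x1 \<in> cball 0 m" "dist (T x1) (y + v) < e / 2"
      using \<open>y + v \<in> closure _\<close> \<open>e > 0\<close> unfolding closure_approachable
      by (metis half_gt_zero imageE)
    obtain x2 where x2: "x2 \<in> cball 0 m" "dist (T x2) y < e / 2"
      using \<open>y \<in> closure _\<close> \<open>e > 0\<close> unfolding closure_approachable
      by (metis half_gt_zero imageE)
    have "x1 - x2 \<in> cball 0 (2 * m)"
      using x1(1) x2(1) norm_triangle_ineq4[of x1 x2] by simp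
    moreover have "T (x1 - x2) - v = (T x1 - (y + v)) - (T x2 - y)"
      by (simp add: linear_diff[OF \<open>linear T\<close>] algebra_simps)
    then have "norm (T (x1 - x2) - v) \<le> norm (T x1 - (y + v)) + norm (T x2 - y)"
      by (metis norm_triangle_ineq4)
    then have "dist (T (x1 - x2)) v < e"
      using x1(2) x2(2) by (simp add: dist_norm)
    ultimately show "\<exists>w\<in>T ` cball 0 (2 * m). dist w v < e"
      by blast
  qed
qed

lemma approximate_preimage:
  fixes T :: "'a::real_normed_vector \<Rightarrow> 'b::real_normed_vector"
  assumes "linear T" and "r > 0" and ball: "ball 0 r \<subseteq> closure (T ` cball 0 m)"
  shows "\<exists>x. norm x \<le> (2 * m / r) * norm y \<and> norm (y - T x) \<le> norm y / 2"
proof (cases "y = 0")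
  case True
  then show ?thesis by (intro exI[of _ 0]) (simp add: linear_0[OF \<open>linear T\<close>])
next
  case False
  define s where "s = r / (2 * norm y)"
  have s: "s > 0" "s * norm y = r / 2"
    using False \<open>r > 0\<close> by (simp_all add: s_def)
  then have "s *\<^sub>R y \<in> ball 0 r"
    using \<open>r > 0\<close> by simp
  then have "s *\<^sub>R y \<in> closure (T ` cball 0 m)"
    using ball by blast
  moreover have "s * norm y / 2 > 0"
    using s \<open>r > 0\<close> by simp
  ultimately obtain w where "w \<in> T ` cball 0 m" "dist w (s *\<^sub>R y) < s * norm y / 2"
    unfolding closure_approachable by blast
  then obtain x' where x': "norm x' \<le> m" "dist (T x') (s *\<^sub>R y) < s * norm y / 2"
    by auto
  define x where "x = (1 / s) *\<^sub>R x'"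
  have "norm x \<le> m / s"
    using x'(1) s by (simp add: x_def divide_right_mono)
  also have "\<dots> = (2 * m / r) * norm y"
    using False \<open>r > 0\<close> by (simp add: s_def field_simps)
  finally have norm_x: "norm x \<le> (2 * m / r) * norm y" .
  have "y - T x = (1 / s) *\<^sub>R (s *\<^sub>R y - T x')"
    using s linear_scale[OF \<open>linear T\<close>] by (simp add: x_def algebra_simps)
  then have "norm (y - T x) = (1 / s) * dist (T x') (s *\<^sub>R y)"
    using s by (simp add: dist_norm norm_minus_commute)
  also have "\<dots> \<le> (1 / s) * (s * norm y / 2)"
    using x'(2) s by (intro mult_left_mono) auto
  also have "\<dots> = norm y / 2"
    using s by simp
  finally show ?thesis
    using norm_x by blast
qed

lemma geometric_bound_suminf:
  fixes xs :: "nat \<Rightarrow> 'a::banach"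
  assumes bound: "\<And>k. norm (xs k) \<le> K * (1 / 2) ^ k"
  shows "summable xs" and "norm (suminf xs) \<le> 2 * K"
proof -
  have geometric: "summable (\<lambda>k. K * (1 / 2 :: real) ^ k)"
    by (intro summable_mult summable_geometric) simp
  have norms: "summable (\<lambda>k. norm (xs k))"
    by (rule summable_comparison_test'[OF geometric]) (use bound in simp)
  then show "summable xs"
    by (rule summable_norm_cancel)
  have "norm (suminf xs) \<le> (\<Sum>k. norm (xs k))"
    by (rule summable_norm[OF norms])
  also have "\<dots> \<le> (\<Sum>k. K * (1 / 2 :: real) ^ k)"
    by (rule suminf_le[OF bound norms geometric])
  also have "\<dots> = 2 * K"
    by (simp add: suminf_mult suminf_geometric)
  finally show "norm (suminf xs) \<le> 2 * K" .
qed

lemma norm_funpow_halving: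
  fixes g :: "'a::real_normed_vector \<Rightarrow> 'a"
  assumes "\<And>z. norm (g z) \<le> norm z / 2"
  shows "norm ((g ^^ k) y) \<le> norm y * (1 / 2) ^ k"
proof (induction k)
  case (Suc k)
  have "norm ((g ^^ Suc k) y) \<le> norm ((g ^^ k) y) / 2"
    using assms[of "(g ^^ k) y"] by simp
  also have "\<dots> \<le> norm y * (1 / 2) ^ k / 2"
    using Suc.IH by simp
  finally show ?case
    by simp
qed simp

lemma successive_approximation:
  fixes T :: "'a::banach \<Rightarrow> 'b::real_normed_vector"
  assumes T: "bounded_linear T" and "C \<ge> 0"
    and approx: "\<And>y. \<exists>x. norm x \<le> C * norm y \<and> norm (y - T x) \<le> norm y / 2"
  shows "\<exists>x. T x = y \<and> norm x \<le> 2 * C * norm y"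
proof -
  have "\<exists>f. \<forall>y. norm (f y) \<le> C * norm y \<and> norm (y - T (f y)) \<le> norm y / 2"
    using approx by (intro choice) blast
  then obtain f where f: "\<And>y. norm (f y) \<le> C * norm y" "\<And>y. norm (y - T (f y)) \<le> norm y / 2"
    by blast
  define residual where "residual k = ((\<lambda>z. z - T (f z)) ^^ k) y" for k
  have residual_Suc: "residual (Suc k) = residual k - T (f (residual k))" for k
    by (simp add: residual_def)
  have residual_bound: "norm (residual k) \<le> norm y * (1 / 2) ^ k" for k
    unfolding residual_def using f(2) by (rule norm_funpow_halving)
  define xs where "xs k = f (residual k)" for k
  have "norm (xs k) \<le> C * norm y * (1 / 2) ^ k" for k
  proof -
    have "norm (xs k) \<le> C * norm (residual k)"
      using f(1) by (simp add: xs_def)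
    also have "\<dots> \<le> C * (norm y * (1 / 2) ^ k)"
      by (rule mult_left_mono[OF residual_bound \<open>C \<ge> 0\<close>])
    finally show ?thesis by (simp add: mult.assoc)
  qed
  note xs = geometric_bound_suminf[OF this]
  have "(\<lambda>k. norm y * (1 / 2 :: real) ^ k) \<longlonglongrightarrow> 0"
    by (intro tendsto_mult_right_zero LIMSEQ_power_zero) simp
  then have "residual \<longlonglongrightarrow> 0"
    by (rule Lim_null_comparison[OF always_eventually[OF allI[OF residual_bound]]])
  then have "(\<lambda>k. residual k - residual (Suc k)) sums (residual 0 - 0)"
    by (rule telescope_sums')
  moreover have "residual k - residual (Suc k) = T (xs k)" for k
    by (simp add: residual_Suc xs_def)
  moreover have "residual 0 = y"
    by (simp add: residual_def)
  ultimately have "(\<lambda>k. T (xs k)) sums y"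
    by simp
  moreover have "(\<lambda>k. T (xs k)) sums T (suminf xs)"
    using bounded_linear.sums[OF T summable_sums[OF xs(1)]] .
  ultimately have "T (suminf xs) = y"
    using sums_unique2 by blast
  then show ?thesis
    using xs(2) by (intro exI[of _ "suminf xs"]) (simp add: mult.assoc)
qed

theorem bounded_linear_inv:
  fixes T :: "'a::banach \<Rightarrow> 'b::banach"
  assumes T: "bounded_linear T" and "bij T"
  shows "bounded_linear (inv T)"
proof -
  have lin: "linear T"
    using T by (rule bounded_linear.linear)
  obtain n y r where "r > 0" and ball: "ball y r \<subseteq> closure (T ` cball 0 (real n))"
    using Baire_closure_image_cball bij_is_surj[OF \<open>bij T\<close>] by blast
  have centered: "ball 0 r \<subseteq> closure (T ` cball 0 (2 * real n))"
    using closure_image_cball_centered[OF lin ball] .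
  have "2 * (2 * real n) / r \<ge> 0"
    using \<open>r > 0\<close> by simp
  then have preimage: "\<exists>x. T x = y \<and> norm x \<le> 2 * (2 * (2 * real n) / r) * norm y" for y
    using successive_approximation[OF T _ approximate_preimage[OF lin \<open>r > 0\<close> centered]]
    by blast
  have inv_T: "inv T (T x) = x" "T (inv T y) = y" for x y
    using \<open>bij T\<close> by (simp_all add: bij_is_inj bij_is_surj surj_f_inv_f)
  show ?thesis
  proof (rule bounded_linear_intro)
    show "inv T (x + y) = inv T x + inv T y" for x y
      using inv_T(1)[of "inv T x + inv T y"] by (simp add: linear_add[OF lin] inv_T(2))
    show "inv T (c *\<^sub>R x) = c *\<^sub>R inv T x" for c x
      using inv_T(1)[of "c *\<^sub>R inv T x"] by (simp add: linear_scale[OF lin] inv_T(2))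
    show "norm (inv T y) \<le> norm y * (2 * (2 * (2 * real n) / r))" for y
      using preimage[of y] inv_T(1) by (auto simp: mult.commute)
  qed
qed

section \<open>Complex operators\<close>

lemma i_operator_bounded_linear: "i_operator A \<Longrightarrow> bounded_linear A"
  by (simp add: i_operator_def)

lemma i_operator_square: "i_operator A \<Longrightarrow> A (A x) = - x"
  by (simp add: i_operator_def)

lemma complex_opI: "bounded_linear T \<Longrightarrow> (\<And>x. T (A x) = B (T x)) \<Longrightarrow> complex_op T A B"
  by (auto simp: complex_op_def)

lemma complex_op_apply: "complex_op T A B \<Longrightarrow> T (A x) = B (T x)"
  by (metis comp_apply complex_op_def)

lemma complex_op_bounded_linear: "complex_op T A B \<Longrightarrow> bounded_linear T"
  by (simp add: complex_op_def)

lemma complex_op_id: "complex_op id A A"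
  by (simp add: complex_op_def bounded_linear_ident[unfolded id_def[symmetric]])

lemma complex_op_compose:
  "complex_op S A B \<Longrightarrow> complex_op R B C \<Longrightarrow> complex_op (R \<circ> S) A C"
  by (intro complex_opI)
    (auto simp: complex_op_apply complex_op_bounded_linear bounded_linear_compose[unfolded o_def[symmetric]])

lemma complex_op_zero: "linear B \<Longrightarrow> complex_op (\<lambda>_. 0) A B"
  by (intro complex_opI) (simp_all add: linear_0)

lemma complex_op_add:
  "linear B \<Longrightarrow> complex_op R1 A B \<Longrightarrow> complex_op R2 A B \<Longrightarrow> complex_op (\<lambda>x. R1 x + R2 x) A B"
  by (intro complex_opI)
    (simp_all add: bounded_linear_add complex_op_bounded_linear complex_op_apply linear_add)

lemma complex_op_diff:
  "linear B \<Longrightarrow> complex_op R1 A B \<Longrightarrow> complex_op R2 A B \<Longrightarrow> complex_op (\<lambda>x. R1 x - R2 x) A B"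
  by (intro complex_opI)
    (simp_all add: bounded_linear_sub complex_op_bounded_linear complex_op_apply linear_diff)

lemma complex_op_pair:
  "complex_op S1 A B1 \<Longrightarrow> complex_op S2 A B2 \<Longrightarrow> complex_op (\<lambda>x. (S1 x, S2 x)) A (map_prod B1 B2)"
  by (intro complex_opI) (simp_all add: bounded_linear_Pair complex_op_bounded_linear complex_op_apply)

lemma complex_op_fst: "complex_op fst (map_prod A B) A"
  by (intro complex_opI) (auto simp: bounded_linear_fst)

lemma complex_op_snd: "complex_op snd (map_prod A B) B"
  by (intro complex_opI) (auto simp: bounded_linear_snd)

lemma complex_op_swap: "complex_op prod.swap (map_prod A B) (map_prod B A)"
proof (rule complex_opI)
  show "bounded_linear (prod.swap :: 'a \<times> 'b \<Rightarrow> 'b \<times> 'a)"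
    unfolding prod.swap_def[abs_def] by (intro bounded_linear_Pair bounded_linear_fst bounded_linear_snd)
qed auto

lemma conj_op_conj_op [simp]: "conj_op (conj_op A) = A"
  by (simp add: conj_op_def)

lemma conj_op_map_prod [simp]: "conj_op (map_prod A B) = map_prod (conj_op A) (conj_op B)"
  by (auto simp: conj_op_def)

lemma sum_op_eq_map_prod: "sum_op A = map_prod A A"
  by (auto simp: sum_op_def)

lemma complex_op_conj: "complex_op T A B \<Longrightarrow> complex_op T (conj_op A) (conj_op B)"
  by (intro complex_opI)
    (simp_all add: complex_op_bounded_linear complex_op_apply conj_op_def
      linear_neg[OF bounded_linear.linear])

lemma complex_op_inv:
  fixes T :: "'a::banach \<Rightarrow> 'b::banach"
  assumes "complex_op T A B" and "bij T"
  shows "complex_op (inv T) B A"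
proof (rule complex_opI)
  show "bounded_linear (inv T)"
    using bounded_linear_inv complex_op_bounded_linear assms by blast
  show "inv T (B y) = A (inv T y)" for y
    using complex_op_apply[OF assms(1), of "inv T y"] \<open>bij T\<close>
    by (metis bij_inv_eq_iff)
qed

lemma complex_op_cscale:
  assumes "i_operator B"
  shows "complex_op (cscale B c) B B"
proof (rule complex_opI)
  interpret B: bounded_linear B
    using i_operator_bounded_linear[OF assms] .
  show "bounded_linear (cscale B c)"
    unfolding cscale_def[abs_def]
    by (intro bounded_linear_add bounded_linear_compose[OF bounded_linear_scaleR_right]
        bounded_linear_ident B.bounded_linear_axioms)
  show "cscale B c (B x) = B (cscale B c x)" for x
    using i_operator_square[OF assms] by (simp add: cscale_def B.add B.scaleR)
qed

section \<open>Operators factoring over [X,A]\<close>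

lemma factors_overI:
  "complex_op S A1 A \<Longrightarrow> complex_op R A B1 \<Longrightarrow> factors_over A A1 B1 (R \<circ> S)"
  unfolding factors_over_def by blast

lemma factors_over_complex_op: "factors_over A A1 B1 T \<Longrightarrow> complex_op T A1 B1"
  unfolding factors_over_def using complex_op_compose by blast

lemma factors_over_id: "factors_over A A A id"
  using factors_overI[OF complex_op_id complex_op_id] by simp

lemma factors_over_compose:
  assumes "factors_over A A1 B1 T" and "complex_op R B1 C1" and "complex_op S D1 A1"
  shows "factors_over A D1 C1 (R \<circ> T \<circ> S)"
proof -
  obtain S0 R0 where S0: "complex_op S0 A1 A" and R0: "complex_op R0 A B1" and "T = R0 \<circ> S0"
    using assms(1) unfolding factors_over_def by blast
  then have "R \<circ> T \<circ> S = (R \<circ> R0) \<circ> (S0 \<circ> S)"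
    by (simp add: comp_assoc)
  then show ?thesis
    using factors_overI[OF complex_op_compose[OF assms(3) S0] complex_op_compose[OF R0 assms(2)]]
    by simp
qed

lemma factors_over_cscale:
  assumes "i_operator B1" and "factors_over A A1 B1 T"
  shows "factors_over A A1 B1 (\<lambda>u. cscale B1 c (T u))"
  using factors_over_compose[OF assms(2) complex_op_cscale[OF assms(1)] complex_op_id]
  by (simp add: comp_def)

lemma factors_over_zero:
  assumes "i_operator A" and "i_operator B1"
  shows "factors_over A A1 B1 (\<lambda>_. 0)"
proof -
  have "linear A" "linear B1"
    using assms by (simp_all add: bounded_linear.linear i_operator_bounded_linear)
  then show ?thesis
    using factors_overI[OF complex_op_zero complex_op_zero, of A B1 A1] by (simp add: comp_def)
qed

lemma factors_over_add:
  fixes A :: "'x::banach \<Rightarrow> 'x" and B1 :: "'v::banach \<Rightarrow> 'v"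
  assumes "i_operator B1" and "cisomorphic A (sum_op A)"
    and "factors_over A A1 B1 T1" and "factors_over A A1 B1 T2"
  shows "factors_over A A1 B1 (\<lambda>u. T1 u + T2 u)"
proof -
  obtain J where J: "complex_op J A (map_prod A A)" "bij J"
    using assms(2) unfolding cisomorphic_def sum_op_eq_map_prod by blast
  obtain S1 R1 where 1: "complex_op S1 A1 A" "complex_op R1 A B1" "T1 = R1 \<circ> S1"
    using assms(3) unfolding factors_over_def by blast
  obtain S2 R2 where 2: "complex_op S2 A1 A" "complex_op R2 A B1" "T2 = R2 \<circ> S2"
    using assms(4) unfolding factors_over_def by blast
  have "complex_op (inv J \<circ> (\<lambda>u. (S1 u, S2 u))) A1 A"
    using complex_op_compose[OF complex_op_pair[OF 1(1) 2(1)] complex_op_inv[OF J]] .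
  moreover have "complex_op (\<lambda>x. (R1 \<circ> fst \<circ> J) x + (R2 \<circ> snd \<circ> J) x) A B1"
    using bounded_linear.linear[OF i_operator_bounded_linear[OF assms(1)]]
    by (intro complex_op_add complex_op_compose[OF J(1)] complex_op_compose[OF _ 1(2)]
        complex_op_compose[OF _ 2(2)] complex_op_fst complex_op_snd)
  moreover have "J (inv J p) = p" for p
    using J(2) by (simp add: bij_is_surj surj_f_inv_f)
  ultimately have "factors_over A A1 B1
      ((\<lambda>x. (R1 \<circ> fst \<circ> J) x + (R2 \<circ> snd \<circ> J) x) \<circ> (inv J \<circ> (\<lambda>u. (S1 u, S2 u))))"
    using factors_overI by blast
  also have "(\<lambda>x. (R1 \<circ> fst \<circ> J) x + (R2 \<circ> snd \<circ> J) x) \<circ> (inv J \<circ> (\<lambda>u. (S1 u, S2 u)))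
      = (\<lambda>u. T1 u + T2 u)"
    using \<open>\<And>p. J (inv J p) = p\<close> 1(3) 2(3) by (simp add: comp_def)
  finally show ?thesis .
qed

lemma factors_over_sum_list:
  fixes A :: "'x::banach \<Rightarrow> 'x" and B1 :: "'v::banach \<Rightarrow> 'v"
  assumes "i_operator A" "i_operator B1" "cisomorphic A (sum_op A)"
    and "\<And>T. T \<in> set Ts \<Longrightarrow> factors_over A A1 B1 T"
  shows "factors_over A A1 B1 (\<lambda>u. \<Sum>T\<leftarrow>Ts. T u)"
  using assms(4)
proof (induction Ts)
  case Nil
  then show ?case using factors_over_zero[OF assms(1,2)] by simp
next
  case (Cons T Ts)
  then show ?case
    by (simp add: factors_over_add[OF assms(2,3)])
qed

text \<open>In complex notation this is \<open>u \<mapsto> (\<phi> u - i \<phi> (i u)) e\<close>: the complex functional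
  with real part \<open>\<phi>\<close>, times the vector \<open>e\<close>.\<close>
definition complex_rank_one ::
  "('u \<Rightarrow> 'u) \<Rightarrow> ('v::real_vector \<Rightarrow> 'v) \<Rightarrow> ('u \<Rightarrow> real) \<Rightarrow> 'v \<Rightarrow> 'u \<Rightarrow> 'v" where
  "complex_rank_one A B \<phi> e u = \<phi> u *\<^sub>R e - \<phi> (A u) *\<^sub>R B e"

lemma complex_op_complex_rank_one:
  assumes "i_operator A" and "i_operator B" and "bounded_linear \<phi>"
  shows "complex_op (complex_rank_one A B \<phi> e) A B"
proof (rule complex_opI)
  interpret A: bounded_linear A
    using i_operator_bounded_linear[OF assms(1)] .
  interpret B: bounded_linear B
    using i_operator_bounded_linear[OF assms(2)] .
  interpret \<phi>: bounded_linear \<phi>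
    by fact
  show "bounded_linear (complex_rank_one A B \<phi> e)"
    unfolding complex_rank_one_def[abs_def]
    by (intro bounded_linear_sub bounded_linear_compose[OF bounded_linear_scaleR_left]
        bounded_linear_compose[OF \<phi>.bounded_linear_axioms A.bounded_linear_axioms]
        \<phi>.bounded_linear_axioms)
  show "complex_rank_one A B \<phi> e (A u) = B (complex_rank_one A B \<phi> e u)" for u
    using i_operator_square[OF assms(1)] i_operator_square[OF assms(2)]
    by (simp add: complex_rank_one_def \<phi>.neg B.diff B.scaleR)
qed

lemma complex_line_coordinate_functional:
  fixes A :: "'x::banach \<Rightarrow> 'x"
  assumes "i_operator A" and "x0 \<noteq> 0"
  shows "\<exists>h :: 'x \<Rightarrow> real. bounded_linear h \<and> h x0 = 1 \<and> h (A x0) = 0"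
proof -
  interpret A: bounded_linear A
    using i_operator_bounded_linear[OF assms(1)] .
  obtain f where f: "bounded_linear f" and "f x0 = norm x0"
    using norming_functional by blast
  interpret f: bounded_linear f
    by fact
  define p where "p = f x0"
  define q where "q = f (A x0)"
  have "p > 0"
    using \<open>f x0 = norm x0\<close> \<open>x0 \<noteq> 0\<close> by (simp add: p_def)
  then have d: "p\<^sup>2 + q\<^sup>2 > 0"
    by (simp add: add_pos_nonneg)
  define h where "h x = (p * f x + q * f (A x)) / (p\<^sup>2 + q\<^sup>2)" for x
  have "bounded_linear h"
    unfolding h_def[abs_def]
    by (intro bounded_linear_divide[THEN bounded_linear_compose] bounded_linear_add
        bounded_linear_mult_right[THEN bounded_linear_compose]
        bounded_linear_compose[OF f A.bounded_linear_axioms] f)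
  moreover have "h x0 = 1"
    using \<open>p > 0\<close> d by (simp add: h_def p_def[symmetric] q_def[symmetric] power2_eq_square)
  moreover have "h (A x0) = 0"
    using i_operator_square[OF assms(1)] by (simp add: h_def p_def q_def f.neg)
  ultimately show ?thesis by blast
qed

lemma factors_over_complex_rank_one:
  fixes A :: "'x::banach \<Rightarrow> 'x" and x0 :: 'x
  assumes A: "i_operator A" and A1: "i_operator A1" and B1: "i_operator B1"
    and "x0 \<noteq> 0" and "bounded_linear \<phi>"
  shows "factors_over A A1 B1 (complex_rank_one A1 B1 \<phi> e)"
proof -
  obtain h :: "'x \<Rightarrow> real" where h: "bounded_linear h" "h x0 = 1" "h (A x0) = 0"
    using complex_line_coordinate_functional[OF A \<open>x0 \<noteq> 0\<close>] by blast
  interpret h: bounded_linear h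
    by fact
  interpret A: bounded_linear A
    using i_operator_bounded_linear[OF A] .
  let ?S = "complex_rank_one A1 A \<phi> x0" and ?R = "complex_rank_one A B1 h e"
  have "factors_over A A1 B1 (?R \<circ> ?S)"
    by (intro factors_overI complex_op_complex_rank_one A A1 B1 h(1) \<open>bounded_linear \<phi>\<close>)
  moreover have "?R \<circ> ?S = complex_rank_one A1 B1 \<phi> e"
    using h(2,3) i_operator_square[OF A]
    by (simp add: fun_eq_iff complex_rank_one_def h.add h.diff h.scaleR A.diff A.scaleR)
  ultimately show ?thesis by simp
qed

lemma finite_rank_complex_rank_one_sum:
  fixes T :: "'u::banach \<Rightarrow> 'v::banach"
  assumes T: "complex_op T A1 B1" and B1: "i_operator B1" and "finite_rank T"
  shows "\<exists>\<phi>s. (\<forall>(\<phi>, e)\<in>set \<phi>s. bounded_linear \<phi>) \<and>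
    T = (\<lambda>u. \<Sum>(\<phi>, e)\<leftarrow>\<phi>s. complex_rank_one A1 B1 \<phi> e u)"
proof -
  interpret B1: bounded_linear B1
    using i_operator_bounded_linear[OF B1] .
  obtain F where "finite F" and range: "range T \<subseteq> span F"
    using \<open>finite_rank T\<close> unfolding finite_rank_def by blast
  then obtain ps where ps: "\<forall>(\<phi>, e)\<in>set ps. bounded_linear \<phi> \<and> e \<in> span F"
    and id_on_span: "\<forall>v\<in>span F. rank_one_sum ps v = v"
    using finite_span_rank_one_projection by blast
  have id_on_range: "rank_one_sum ps (T u) = T u" for u
    using id_on_span range by blast
  define \<phi>s where "\<phi>s = map (\<lambda>(\<phi>, e). (\<lambda>u. \<phi> (T u) / 2, e)) ps"
  have "bounded_linear (\<lambda>u. \<phi> (T u) / 2)" if "(\<phi>, e) \<in> set ps" for \<phi> e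
    using bspec[OF ps that] complex_op_bounded_linear[OF T]
    by (auto intro: bounded_linear_divide[THEN bounded_linear_compose] bounded_linear_compose)
  then have "\<forall>(\<phi>, e)\<in>set \<phi>s. bounded_linear \<phi>"
    by (auto simp: \<phi>s_def)
  moreover have "(\<Sum>(\<phi>, e)\<leftarrow>map (\<lambda>(\<phi>, e). (\<lambda>u. \<phi> (T u) / 2, e)) qs. complex_rank_one A1 B1 \<phi> e u)
      = (1 / 2) *\<^sub>R (rank_one_sum qs (T u) - B1 (rank_one_sum qs (T (A1 u))))" for qs u
    by (induction qs)
      (auto simp: complex_rank_one_def rank_one_sum_def B1.add B1.diff B1.scaleR algebra_simps)
  \<comment> \<open>\<open>T = (T - B1 \<circ> T \<circ> A1) / 2\<close> because \<open>T \<circ> A1 = B1 \<circ> T\<close> and \<open>B1 \<circ> B1 = -id\<close>\<close>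
  moreover have "(1 / 2) *\<^sub>R (T u - B1 (T (A1 u))) = T u" for u
    using complex_op_apply[OF T] i_operator_square[OF B1] by (simp add: scaleR_add_left[symmetric])
  ultimately show ?thesis
    by (intro exI[of _ \<phi>s]) (simp add: \<phi>s_def fun_eq_iff id_on_range)
qed

lemma factors_over_finite_rank:
  fixes A :: "'x::banach \<Rightarrow> 'x" and x0 :: 'x
  assumes "i_operator A" and "i_operator A1" and "i_operator B1" and "cisomorphic A (sum_op A)"
    and "x0 \<noteq> 0" and "complex_op T A1 B1" and "finite_rank T"
  shows "factors_over A A1 B1 T"
proof -
  obtain \<phi>s where "\<forall>(\<phi>, e)\<in>set \<phi>s. bounded_linear \<phi>"
    and T: "T = (\<lambda>u. \<Sum>(\<phi>, e)\<leftarrow>\<phi>s. complex_rank_one A1 B1 \<phi> e u)"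
    using finite_rank_complex_rank_one_sum assms(3,6,7) by blast
  then have "factors_over A A1 B1 (\<lambda>u. \<Sum>R\<leftarrow>map (\<lambda>(\<phi>, e). complex_rank_one A1 B1 \<phi> e) \<phi>s. R u)"
    using factors_over_complex_rank_one[OF assms(1-3,5)]
    by (intro factors_over_sum_list[OF assms(1,3,4)]) auto
  then show ?thesis
    by (simp add: T case_prod_unfold o_def)
qed

section \<open>Non-self-conjugacy\<close>

text \<open>If \<open>Y\<close> is a retract of \<open>X\<close> and \<open>Y \<simeq> Z \<oplus> Y\<close>, then \<open>X \<simeq> Z \<oplus> X\<close>: the map below regroups
  \<open>X = Y \<oplus> ker R \<simeq> Z \<oplus> (Y \<oplus> ker R)\<close>.\<close>
lemma bij_retract_absorbs_summand:
  fixes R :: "'x::real_vector \<Rightarrow> 'y::real_vector" and J :: "'y \<Rightarrow> 'z \<times> 'y"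
  assumes "linear R" and RS: "\<And>y. R (S y) = y" and JK: "\<And>p. J (K p) = p" and KJ: "\<And>y. K (J y) = y"
  shows "bij (\<lambda>x. (fst (J (R x)), S (snd (J (R x))) + (x - S (R x))))" (is "bij ?F")
proof (rule bij_betw_byWitness[where f' = "\<lambda>p. S (K (fst p, R (snd p))) + (snd p - S (R (snd p)))"])
  show "\<forall>p\<in>UNIV. ?F (S (K (fst p, R (snd p))) + (snd p - S (R (snd p)))) = p"
  proof
    fix p :: "'z \<times> 'x"
    have "R (S (K (fst p, R (snd p))) + (snd p - S (R (snd p)))) = K (fst p, R (snd p))"
      by (simp add: linear_add[OF \<open>linear R\<close>] linear_diff[OF \<open>linear R\<close>] RS)
    then show "?F (S (K (fst p, R (snd p))) + (snd p - S (R (snd p)))) = p"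
      by (simp add: JK)
  qed
  show "\<forall>x\<in>UNIV. S (K (fst (?F x), R (snd (?F x)))) + (snd (?F x) - S (R (snd (?F x)))) = x"
  proof
    fix x
    have "R (snd (?F x)) = snd (J (R x))"
      by (simp add: linear_add[OF \<open>linear R\<close>] linear_diff[OF \<open>linear R\<close>] RS)
    then show "S (K (fst (?F x), R (snd (?F x)))) + (snd (?F x) - S (R (snd (?F x)))) = x"
      by (simp add: KJ)
  qed
qed auto

lemma cisomorphic_conj_prod_of_conj_retract:
  fixes A :: "'x::banach \<Rightarrow> 'x"
  assumes A: "i_operator A" and "cisomorphic A (sum_op A)"
    and S: "complex_op S (conj_op A) A" and R: "complex_op R A (conj_op A)"
    and RS: "\<And>x. R (S x) = x"
  shows "cisomorphic A (map_prod (conj_op A) A)"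
proof -
  obtain J where J: "complex_op J A (map_prod A A)" "bij J"
    using assms(2) unfolding cisomorphic_def sum_op_eq_map_prod by blast
  have "linear A"
    using A by (simp add: bounded_linear.linear i_operator_bounded_linear)
  have "complex_op J (conj_op A) (map_prod (conj_op A) (conj_op A))"
    using complex_op_conj[OF J(1)] by simp
  then have "complex_op (\<lambda>x. (fst (J (R x)), S (snd (J (R x))) + (x - S (R x)))) A
      (map_prod (conj_op A) A)"
    using \<open>linear A\<close>
    by (intro complex_op_pair complex_op_add complex_op_diff complex_op_id[unfolded id_def]
        complex_op_compose[OF complex_op_compose[OF R] complex_op_fst, unfolded o_def]
        complex_op_compose[OF complex_op_compose[OF complex_op_compose[OF R] complex_op_snd] S,
          unfolded o_def]
        complex_op_compose[OF R S, unfolded o_def])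
  moreover have "bij (\<lambda>x. (fst (J (R x)), S (snd (J (R x))) + (x - S (R x))))"
    using J(2) RS bounded_linear.linear[OF complex_op_bounded_linear[OF R]]
    by (intro bij_retract_absorbs_summand[where K = "inv J"])
      (simp_all add: bij_is_inj bij_is_surj surj_f_inv_f)
  ultimately show ?thesis
    unfolding cisomorphic_def by blast
qed

lemma cisomorphic_conj_of_conj_prod:
  fixes A :: "'x::banach \<Rightarrow> 'x"
  assumes "cisomorphic A (map_prod (conj_op A) A)"
  shows "cisomorphic A (conj_op A)"
proof -
  obtain F where F: "complex_op F A (map_prod (conj_op A) A)" "bij F"
    using assms unfolding cisomorphic_def by blast
  \<comment> \<open>conjugating F gives \<open>[X,-A] \<simeq> [X,A] \<oplus> [X,-A]\<close>; swapping the summands turns its inverse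
    into a map to \<open>[X,-A]\<close>\<close>
  have "complex_op (inv F) (map_prod A (conj_op A)) (conj_op A)"
    using complex_op_conj[OF complex_op_inv[OF F]] by simp
  then have "complex_op (inv F \<circ> prod.swap \<circ> F) A (conj_op A)"
    using complex_op_compose[OF complex_op_compose[OF F(1) complex_op_swap]] by (simp add: comp_assoc)
  moreover have "bij (inv F \<circ> prod.swap \<circ> F)"
    using F(2) by (intro bij_comp bij_imp_bij_inv) simp_all
  ultimately show ?thesis
    unfolding cisomorphic_def by blast
qed

lemma not_factors_over_conj_id:
  fixes A :: "'x::banach \<Rightarrow> 'x"
  assumes "i_operator A" and "\<not> cisomorphic A (conj_op A)" and "cisomorphic A (sum_op A)"
  shows "\<not> factors_over A (conj_op A) (conj_op A) id"
proof
  assume "factors_over A (conj_op A) (conj_op A) id"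
  then obtain S R where "complex_op S (conj_op A) A" "complex_op R A (conj_op A)" "id = R \<circ> S"
    unfolding factors_over_def by blast
  then have "cisomorphic A (map_prod (conj_op A) A)"
    using cisomorphic_conj_prod_of_conj_retract[OF assms(1,3)] by (metis comp_apply id_apply)
  then show False
    using cisomorphic_conj_of_conj_prod assms(2) by blast
qed

lemma nonzero_if_not_cisomorphic_conj:
  fixes A :: "'x::banach \<Rightarrow> 'x"
  assumes "\<not> cisomorphic A (conj_op A)"
  shows "\<exists>x0::'x. x0 \<noteq> 0"
proof (rule ccontr)
  assume "\<not> (\<exists>x0::'x. x0 \<noteq> 0)"
  then have zero: "x = 0" for x :: 'x
    by blast
  have "conj_op A = A"
    using zero[of "conj_op A _"] zero[of "A _"] by (simp add: fun_eq_iff)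
  then show False
    using assms complex_op_id[of A] bij_id unfolding cisomorphic_def by metis
qed

theorem proposition6:
  fixes A :: "'x::banach \<Rightarrow> 'x"
  assumes "i_operator A"
    and "\<not> cisomorphic A (conj_op A)"
    and "cisomorphic A (sum_op A)"
  shows
    \<comment> \<open>(1) every member of C is a complex operator\<close>
    "(\<forall>(A1::'u::banach \<Rightarrow> 'u) (B1::'v::banach \<Rightarrow> 'v) T.
        i_operator A1 \<and> i_operator B1 \<and> factors_over A A1 B1 T \<longrightarrow> complex_op T A1 B1)
   \<comment> \<open>(2) each component C(U,V) is a complex linear subspace\<close>
   \<and> (\<forall>(A1::'u::banach \<Rightarrow> 'u) (B1::'v::banach \<Rightarrow> 'v).
        i_operator A1 \<and> i_operator B1 \<longrightarrow>
          factors_over A A1 B1 (\<lambda>_. 0)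
        \<and> (\<forall>T1 T2. factors_over A A1 B1 T1 \<and> factors_over A A1 B1 T2
                \<longrightarrow> factors_over A A1 B1 (\<lambda>u. T1 u + T2 u))
        \<and> (\<forall>c T. factors_over A A1 B1 T \<longrightarrow> factors_over A A1 B1 (\<lambda>u. cscale B1 c (T u))))
   \<comment> \<open>(3) C contains all finite rank complex operators\<close>
   \<and> (\<forall>(A1::'u::banach \<Rightarrow> 'u) (B1::'v::banach \<Rightarrow> 'v) T.
        i_operator A1 \<and> i_operator B1 \<and> complex_op T A1 B1 \<and> finite_rank T
          \<longrightarrow> factors_over A A1 B1 T)
   \<comment> \<open>(4) ideal property\<close>
   \<and> (\<forall>(A1::'u::banach \<Rightarrow> 'u) (B1::'v::banach \<Rightarrow> 'v) (C1::'w::banach \<Rightarrow> 'w)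
        (D1::'z::banach \<Rightarrow> 'z) T R S.
        i_operator A1 \<and> i_operator B1 \<and> i_operator C1 \<and> i_operator D1
        \<and> factors_over A A1 B1 T \<and> complex_op R B1 C1 \<and> complex_op S D1 A1
          \<longrightarrow> factors_over A D1 C1 (R \<circ> T \<circ> S))
   \<comment> \<open>(5) C is not self conjugate\<close>
   \<and> (\<exists>(A1::'x \<Rightarrow> 'x) (B1::'x \<Rightarrow> 'x) T.
        i_operator A1 \<and> i_operator B1 \<and> factors_over A A1 B1 T
        \<and> \<not> factors_over A (conj_op A1) (conj_op B1) T)"
proof -
  obtain x0 :: 'x where "x0 \<noteq> 0"
    using nonzero_if_not_cisomorphic_conj[OF assms(2)] by blast
  show ?thesis
    apply (intro conjI allI impI)
    subgoal using factors_over_complex_op by blast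
    subgoal using factors_over_zero[OF assms(1)] by blast
    subgoal using factors_over_add[OF _ assms(3)] by blast
    subgoal using factors_over_cscale by blast
    subgoal using factors_over_finite_rank[OF assms(1) _ _ assms(3) \<open>x0 \<noteq> 0\<close>] by blast
    subgoal using factors_over_compose by blast
    subgoal using assms(1) factors_over_id not_factors_over_conj_id[OF assms] by blast
    done
qed

end
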